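(* For every labelled program $P$ over a finite signature, every stable model of $P$ is a justified model of $P$: $\mathit{SM}(P)\subseteq \mathit{JM}(P)$.
   Context: Fix a finite non-empty set $\mathit{At}$ of propositional atoms. A labelled rule $r$ has the form $\ell : p_1 \vee \dots \vee p_m \leftarrow q_1 \wedge \dots \wedge q_n \wedge \neg s_1 \wedge \dots \wedge \neg s_j \wedge \neg\neg t_1 \wedge \dots \wedge \neg\neg t_k$ with $m,n,j,k \ge 0$ and atoms in $\mathit{At}$; $\mathit{Lb}(r)=\ell$, $\mathit{Hd}(r)=p_1\vee\dots\vee p_m$, $H(r)=\{p_1,\dots,p_m\}$, $\mathit{Bd}(r)$ is the whole antecedent, $\mathit{Bd}^+(r)=q_1\wedge\dots\wedge q_n$, $B^+(r)=\{q_1,\dots,q_n\}$, $\mathit{Bd}^-(r)=\neg s_1 \wedge \dots \wedge \neg s_j \wedge \neg\neg t_1 \wedge \dots \wedge \neg\neg t_k$. Empty disjunction is $\bot$, empty conjunction $\top$. A labelled program $P$ is a finite set of labelled rules with no repeated label; $\mathit{Lb}(P)$ is its set of labels. An interpretation $I\subseteq\mathit{At}$ is a (classical) model of $P$ if $I\models \mathit{Bd}(r)\to\mathit{Hd}(r)$ for every $r\in P$. The reduct is $P^I=\{\ \mathit{Lb}(r): \mathit{Hd}(r) \leftarrow \mathit{Bd}^+(r) \mid r \in P,\ I \models \mathit{Bd}^-(r)\ \}$. $I$ is a stable model of $P$ if $I$ is a $\subseteq$-minimal classical model of $P^I$; $\mathit{SM}(P)$ is the set of stable models. $\mathit{Sup}(I,P,p)=\{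 r \in P \mid p \in H(r),\ I \models \mathit{Bd}(r)\}$. A support graph of a model $I$ under $P$ is a directed graph $G=\langle I,E,\lambda\rangle$ with vertex set $I$, edges $E\subseteq I\times I$ and a labelling $\lambda: I\to \mathit{Lb}(P)$ such that (i) $\lambda$ is injective, and (ii) for every $p\in I$, the rule $r\in P$ with $\mathit{Lb}(r)=\lambda(p)$ satisfies $r\in \mathit{Sup}(I,P,p)$ and $B^+(r)=\{q \mid (q,p)\in E\}$. An explanation is an acyclic support graph. A classical model $I$ of $P$ is a justified model if some explanation of $I$ under $P$ exists; $\mathit{JM}(P)$ is the set of justified models. *)

theory Defs
  imports Main
begin

text \<open>Atoms range over a finite type 'a (the finite non-empty signature At = UNIV).
A labelled rule  l : p1 v ... v pm <- q1 & ... & qn & ~s1 & ... & ~sj & ~~t1 & ... & ~~tk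
is represented by its label, head atoms, positive body atoms, negated body atoms and
doubly negated body atoms.\<close>

record ('a, 'l) lrule =
  r_lb  :: 'l
  r_hd  :: "'a set"
  r_pos :: "'a set"
  r_neg :: "'a set"
  r_nn  :: "'a set"

definition labelled_program :: "('a, 'l) lrule set \<Rightarrow> bool" where
  "labelled_program P \<longleftrightarrow> finite P \<and> inj_on r_lb P"

definition Lb :: "('a, 'l) lrule set \<Rightarrow> 'l set" where
  "Lb P = r_lb ` P"

definition sat_hd :: "'a set \<Rightarrow> ('a, 'l) lrule \<Rightarrow> bool" where
  "sat_hd I r \<longleftrightarrow> (\<exists>p\<in>r_hd r. p \<in> I)"

definition sat_bd_neg :: "'a set \<Rightarrow> ('a, 'l) lrule \<Rightarrow> bool" where
  "sat_bd_neg I r \<longleftrightarrow> (\<forall>s\<in>r_neg r. s \<notin> I) \<and> (\<forall>t\<in>r_nn r. t \<in> I)"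

definition sat_bd :: "'a set \<Rightarrow> ('a, 'l) lrule \<Rightarrow> bool" where
  "sat_bd I r \<longleftrightarrow> (\<forall>q\<in>r_pos r. q \<in> I) \<and> sat_bd_neg I r"

definition is_model :: "'a set \<Rightarrow> ('a, 'l) lrule set \<Rightarrow> bool" where
  "is_model I P \<longleftrightarrow> (\<forall>r\<in>P. sat_bd I r \<longrightarrow> sat_hd I r)"

definition reduct :: "('a, 'l) lrule set \<Rightarrow> 'a set \<Rightarrow> ('a, 'l) lrule set" where
  "reduct P I = {\<lparr>r_lb = r_lb r, r_hd = r_hd r, r_pos = r_pos r, r_neg = {}, r_nn = {}\<rparr> | r.
                   r \<in> P \<and> sat_bd_neg I r}"

definition stable_model :: "'a set \<Rightarrow> ('a, 'l) lrule set \<Rightarrow> bool" where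
  "stable_model I P \<longleftrightarrow> is_model I (reduct P I) \<and>
     (\<forall>J. J \<subset> I \<longrightarrow> \<not> is_model J (reduct P I))"

definition SM :: "('a, 'l) lrule set \<Rightarrow> 'a set set" where
  "SM P = {I. stable_model I P}"

definition Sup :: "'a set \<Rightarrow> ('a, 'l) lrule set \<Rightarrow> 'a \<Rightarrow> ('a, 'l) lrule set" where
  "Sup I P p = {r \<in> P. p \<in> r_hd r \<and> sat_bd I r}"

definition support_graph ::
  "'a set \<Rightarrow> ('a, 'l) lrule set \<Rightarrow> ('a \<times> 'a) set \<Rightarrow> ('a \<Rightarrow> 'l) \<Rightarrow> bool" where
  "support_graph I P E lam \<longleftrightarrow>
     E \<subseteq> I \<times> I \<and> lam ` I \<subseteq> Lb P \<and> inj_on lam I \<and>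
     (\<forall>p\<in>I. \<forall>r\<in>P. r_lb r = lam p \<longrightarrow>
         r \<in> Sup I P p \<and> r_pos r = {q. (q, p) \<in> E})"

definition explanation ::
  "'a set \<Rightarrow> ('a, 'l) lrule set \<Rightarrow> ('a \<times> 'a) set \<Rightarrow> ('a \<Rightarrow> 'l) \<Rightarrow> bool" where
  "explanation I P E lam \<longleftrightarrow> support_graph I P E lam \<and> acyclic E"

definition justified_model :: "'a set \<Rightarrow> ('a, 'l) lrule set \<Rightarrow> bool" where
  "justified_model I P \<longleftrightarrow> is_model I P \<and> (\<exists>E lam. explanation I P E lam)"

definition JM :: "('a, 'l) lrule set \<Rightarrow> 'a set set" where
  "JM P = {I. justified_model I P}"

end

theory Submission
  imports Defs
begin

text \<open>Since a stable model I is a minimal model of the reduct, every proper subset J of I violates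
some reduct rule: its positive body lies in J while its head misses J, and since I satisfies the rule
some head atom p lies in I - J. Starting from J = {} we therefore add atoms one at a time, labelling
each new atom p by the rule that produced it and drawing edges from its positive body (which lies in
the already built part) into p. New vertices only receive edges, so the graph stays acyclic, and
injectivity of the labelling holds because a rule whose head misses J cannot label any atom of J.\<close>

definition support_graph_on ::
  "'a set \<Rightarrow> ('a, 'l) lrule set \<Rightarrow> 'a set \<Rightarrow> ('a \<times> 'a) set \<Rightarrow> ('a \<Rightarrow> 'l) \<Rightarrow> bool" where
  "support_graph_on I P J E lam \<longleftrightarrow>
     E \<subseteq> J \<times> J \<and> lam ` J \<subseteq> Lb P \<and> inj_on lam J \<and>
     (\<forall>p\<in>J. \<forall>r\<in>P. r_lb r = lam p \<longrightarrow>
         r \<in> Sup I P p \<and> r_pos r = {q. (q, p) \<in> E})"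

lemma support_graph_eq_support_graph_on:
  "support_graph I P E lam \<longleftrightarrow> support_graph_on I P I E lam"
  unfolding support_graph_def support_graph_on_def ..

lemma reduct_memI:
  assumes "r \<in> P" and "sat_bd_neg I r"
  shows "\<lparr>r_lb = r_lb r, r_hd = r_hd r, r_pos = r_pos r, r_neg = {}, r_nn = {}\<rparr> \<in> reduct P I"
  using assms unfolding reduct_def by blast

lemma model_of_reduct_imp_model:
  assumes "is_model I (reduct P I)"
  shows "is_model I P"
  unfolding is_model_def
proof (intro ballI impI)
  fix r assume r: "r \<in> P" "sat_bd I r"
  let ?r' = "\<lparr>r_lb = r_lb r, r_hd = r_hd r, r_pos = r_pos r, r_neg = {}, r_nn = {}\<rparr>"
  have "?r' \<in> reduct P I" using r by (intro reduct_memI) (auto simp: sat_bd_def)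
  moreover have "sat_bd I ?r'" using r by (simp add: sat_bd_def sat_bd_neg_def)
  ultimately have "sat_hd I ?r'" using assms unfolding is_model_def by blast
  then show "sat_hd I r" by (simp add: sat_hd_def)
qed

lemma violated_reduct_rule_extends:
  assumes I: "is_model I (reduct P I)" and J: "\<not> is_model J (reduct P I)" "J \<subseteq> I"
  obtains r p where "r \<in> P" "sat_bd I r" "r_pos r \<subseteq> J" "r_hd r \<inter> J = {}"
    "p \<in> r_hd r" "p \<in> I"
proof -
  obtain r' where r': "r' \<in> reduct P I" "sat_bd J r'" "\<not> sat_hd J r'"
    using J(1) unfolding is_model_def by blast
  then obtain r where r: "r \<in> P" "sat_bd_neg I r"
    and r'_eq: "r' = \<lparr>r_lb = r_lb r, r_hd = r_hd r, r_pos = r_pos r, r_neg = {}, r_nn = {}\<rparr>"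
    unfolding reduct_def by blast
  have pos: "r_pos r \<subseteq> J" and hd: "r_hd r \<inter> J = {}"
    using r'(2,3) by (auto simp: r'_eq sat_bd_def sat_hd_def)
  have "sat_bd I r'" using pos J(2) by (auto simp: r'_eq sat_bd_def sat_bd_neg_def)
  then have "sat_hd I r'" using I r'(1) unfolding is_model_def by blast
  then obtain p where "p \<in> r_hd r" "p \<in> I" by (auto simp: r'_eq sat_hd_def)
  moreover have "sat_bd I r" using r(2) pos J(2) by (auto simp: sat_bd_def)
  ultimately show thesis using that r(1) pos hd by blast
qed

lemma wf_Un_edges_into_fresh:
  assumes "wf E" and "Domain E \<subseteq> J" and "B \<subseteq> J" and "p \<notin> J"
  shows "wf (E \<union> B \<times> {p})"
proof (rule wf_Un)
  show "wf (B \<times> {p})" using assms(3,4) by (intro wf_no_loop) blast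
  show "Domain E \<inter> Range (B \<times> {p}) = {}" using assms(2,4) by auto
qed (fact \<open>wf E\<close>)

lemma support_graph_on_insert:
  assumes G: "support_graph_on I P J E lam" and inj: "inj_on r_lb P"
    and r: "r \<in> P" "sat_bd I r" "r_pos r \<subseteq> J" "r_hd r \<inter> J = {}" and p: "p \<in> r_hd r"
  shows "support_graph_on I P (insert p J) (E \<union> r_pos r \<times> {p}) (lam(p := r_lb r))"
proof -
  have E: "E \<subseteq> J \<times> J" and lab: "lam ` J \<subseteq> Lb P" and inj_lam: "inj_on lam J"
    and supp: "\<And>x r0. x \<in> J \<Longrightarrow> r0 \<in> P \<Longrightarrow> r_lb r0 = lam x \<Longrightarrow>
                 r0 \<in> Sup I P x \<and> r_pos r0 = {q. (q, x) \<in> E}"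
    using G unfolding support_graph_on_def by blast+
  have pJ: "p \<notin> J" using p r(4) by blast
  have fresh_label: "r_lb r \<notin> lam ` J"
  proof
    assume "r_lb r \<in> lam ` J"
    then obtain x where "x \<in> J" "r_lb r = lam x" by blast
    with supp[of x r] r(1) have "x \<in> r_hd r \<inter> J" by (auto simp: Sup_def)
    with r(4) show False by blast
  qed
  have same_rule: "r0 = r" if "r0 \<in> P" "r_lb r0 = r_lb r" for r0
    using inj that(2,1) r(1) by (rule inj_onD)
  show ?thesis
    unfolding support_graph_on_def
  proof (intro conjI)
    show "E \<union> r_pos r \<times> {p} \<subseteq> insert p J \<times> insert p J" using E r(3) by blast
    show "(lam(p := r_lb r)) ` insert p J \<subseteq> Lb P" using lab r(1) pJ by (auto simp: Lb_def)
    show "inj_on (lam(p := r_lb r)) (insert p J)"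
      using inj_lam fresh_label pJ by (auto simp: inj_on_fun_updI)
  next
    show "\<forall>x\<in>insert p J. \<forall>r0\<in>P. r_lb r0 = (lam(p := r_lb r)) x \<longrightarrow>
            r0 \<in> Sup I P x \<and> r_pos r0 = {q. (q, x) \<in> E \<union> r_pos r \<times> {p}}"
    proof (intro ballI impI)
      fix x r0 assume x: "x \<in> insert p J" and r0: "r0 \<in> P" "r_lb r0 = (lam(p := r_lb r)) x"
      show "r0 \<in> Sup I P x \<and> r_pos r0 = {q. (q, x) \<in> E \<union> r_pos r \<times> {p}}"
      proof (cases "x = p")
        case True
        then have "r0 = r" using r0 same_rule by simp
        moreover have "{q. (q, p) \<in> E \<union> r_pos r \<times> {p}} = r_pos r" using E pJ by blast
        ultimately show ?thesis using True r(1,2) p by (simp add: Sup_def)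
      next
        case False
        then show ?thesis using x r0 supp[of x r0] by auto
      qed
    qed
  qed
qed

lemma stable_model_has_explanation:
  assumes "finite I" and inj: "inj_on r_lb P" and sm: "stable_model I P"
  shows "\<exists>E lam. explanation I P E lam"
proof -
  define partial where
    "partial = {J. J \<subseteq> I \<and> (\<exists>E lam. support_graph_on I P J E lam \<and> wf E)}"
  have "{} \<in> partial" unfolding partial_def support_graph_on_def by auto
  moreover have "finite partial" using \<open>finite I\<close> unfolding partial_def by simp
  ultimately obtain J where "J \<in> partial" and maximal: "\<And>K. K \<in> partial \<Longrightarrow> J \<subseteq> K \<Longrightarrow> J = K"
    using finite_has_maximal[of partial] by blast
  then obtain E lam where JI: "J \<subseteq> I" and G: "support_graph_on I P J E lam" and "wf E"
    unfolding partial_def by blast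
  have "J = I"
  proof (rule ccontr)
    assume "J \<noteq> I"
    with JI sm have "is_model I (reduct P I)" and "\<not> is_model J (reduct P I)"
      unfolding stable_model_def by blast+
    then obtain r p where r: "r \<in> P" "sat_bd I r" "r_pos r \<subseteq> J" "r_hd r \<inter> J = {}"
      and p: "p \<in> r_hd r" "p \<in> I"
      using JI by (rule violated_reduct_rule_extends)
    have "support_graph_on I P (insert p J) (E \<union> r_pos r \<times> {p}) (lam(p := r_lb r))"
      using G inj r p(1) by (rule support_graph_on_insert)
    moreover have "wf (E \<union> r_pos r \<times> {p})"
      using \<open>wf E\<close> G r(3,4) p(1) by (intro wf_Un_edges_into_fresh) (auto simp: support_graph_on_def)
    ultimately have "insert p J \<in> partial" using JI p(2) unfolding partial_def by blast
    with maximal have "J = insert p J" by blast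
    with r(4) p(1) show False by blast
  qed
  with G \<open>wf E\<close> show ?thesis
    by (auto simp: explanation_def support_graph_eq_support_graph_on intro: wf_acyclic)
qed

theorem theorem1:
  fixes P :: "('a::finite, 'l) lrule set"
  assumes "labelled_program P"
  shows "SM P \<subseteq> JM P"
proof
  fix I assume "I \<in> SM P"
  then have sm: "stable_model I P" by (simp add: SM_def)
  then have "is_model I P"
    unfolding stable_model_def by (blast intro: model_of_reduct_imp_model)
  moreover have "\<exists>E lam. explanation I P E lam"
    using assms sm by (intro stable_model_has_explanation) (auto simp: labelled_program_def)
  ultimately show "I \<in> JM P" by (simp add: JM_def justified_model_def)
qed

end
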